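(* Let $k \ge 2$ and $v$ be integers with $v \equiv 2 \pmod{k-1}$ and $v \ge k(k-1)^2 + 2k$. Then \[ \frac{2v-4}{k-1} \le \beta(2,v,k) \le \frac{2v-4}{k-1} + k^2 - 2. \]
   Context: For integers $v \ge k \ge 2$, a $(v,k)$-packing is a pair $(X,\mathcal{B})$ where $X$ is a set of $v$ points and $\mathcal{B}$ is a set of $k$-subsets of $X$ (blocks) such that every pair of distinct points lies in at most one block. A partial parallel class (PPC) is a set of pairwise disjoint blocks; its size is the number of blocks. A PPC of size $\rho$ is maximum if the packing has no PPC of size $\rho+1$. $\beta(\rho,v,k)$ denotes the maximum number of blocks in a $(v,k)$-packing in which the maximum PPC has size $\rho$. *)

theory Defs
  imports Complex_Main "HOL-Library.Disjoint_Sets"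
begin

definition is_packing :: "nat \<Rightarrow> nat \<Rightarrow> nat set set \<Rightarrow> bool" where
  "is_packing v k \<B> \<longleftrightarrow>
     (\<forall>B\<in>\<B>. B \<subseteq> {..<v} \<and> card B = k) \<and>
     (\<forall>x y. x \<noteq> y \<longrightarrow> card {B\<in>\<B>. x \<in> B \<and> y \<in> B} \<le> 1)"

definition is_ppc :: "nat set set \<Rightarrow> nat set set \<Rightarrow> bool" where
  "is_ppc \<B> P \<longleftrightarrow> P \<subseteq> \<B> \<and> disjoint P"

definition max_ppc_size :: "nat set set \<Rightarrow> nat \<Rightarrow> bool" where
  "max_ppc_size \<B> \<rho> \<longleftrightarrow>
     (\<exists>P. is_ppc \<B> P \<and> card P = \<rho>) \<and> \<not> (\<exists>P. is_ppc \<B> P \<and> card P = \<rho> + 1)"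

definition beta :: "nat \<Rightarrow> nat \<Rightarrow> nat \<Rightarrow> nat" where
  "beta \<rho> v k = Max {card \<B> | \<B>. is_packing v k \<B> \<and> max_ppc_size \<B> \<rho>}"

end

theory Submission
  imports Defs "HOL-Number_Theory.Cong"
begin

text \<open>Write v = m (k - 1) + 2.

  Lower bound: the points other than 0 and 1 form an m \<times> (k - 1) grid. The m rows, each
  extended by 0, and the m cyclic diagonals, each extended by 1, form a packing with 2m blocks
  in which every block contains 0 or 1, so no three blocks are pairwise disjoint.

  Upper bound: let A, B be disjoint blocks. Every block meets A or B, and the blocks avoiding
  A pairwise intersect, since with A they would otherwise give three disjoint blocks. An
  intersecting family of blocks either has a common point, and then lies among the at most
  m + 1 blocks through it, or has at most k (k - 1) + 1 members. Adding the at most k^2 blocks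
  meeting both A and B, each of the four resulting cases leaves at most 2m + k^2 - 2 blocks
  once m \<ge> k (k - 1) + 2.\<close>

locale packing =
  fixes v k :: nat and \<B> :: "nat set set"
  assumes is_packing: "is_packing v k \<B>"
begin

definition blocks_through :: "nat \<Rightarrow> nat set set" where
  "blocks_through x = {D\<in>\<B>. x \<in> D}"

definition blocks_avoiding :: "nat set \<Rightarrow> nat set set" where
  "blocks_avoiding X = {D\<in>\<B>. D \<inter> X = {}}"

definition blocks_meeting :: "nat set \<Rightarrow> nat set \<Rightarrow> nat set set" where
  "blocks_meeting X Y = {D\<in>\<B>. D \<inter> X \<noteq> {} \<and> D \<inter> Y \<noteq> {}}"

lemma block_subset: "D \<in> \<B> \<Longrightarrow> D \<subseteq> {..<v}"
  and block_card: "D \<in> \<B> \<Longrightarrow> card D = k"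
  using is_packing unfolding is_packing_def by auto

lemma finite_block: "D \<in> \<B> \<Longrightarrow> finite D"
  using block_subset finite_subset by blast

lemma finite_blocks: "finite \<B>"
  by (rule finite_subset[of _ "Pow {..<v}"]) (use block_subset in auto)

lemma card_blocks_through_pair_le: "x \<noteq> y \<Longrightarrow> card {D\<in>\<B>. x \<in> D \<and> y \<in> D} \<le> 1"
  using is_packing unfolding is_packing_def by blast

lemma block_unique:
  assumes "C \<in> \<B>" "D \<in> \<B>" "x \<noteq> y" "x \<in> C" "y \<in> C" "x \<in> D" "y \<in> D"
  shows "C = D"
  using card_blocks_through_pair_le[OF \<open>x \<noteq> y\<close>] finite_blocks assms
  by (auto simp: card_le_Suc0_iff_eq)

lemma card_blocks_through_le:
  assumes "finite W" and "\<And>D. D \<in> blocks_through x \<Longrightarrow> D - {x} \<subseteq> W"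
  shows "(k - 1) * card (blocks_through x) \<le> card W"
proof -
  have disjoint: "(D - {x}) \<inter> (E - {x}) = {}"
    if "D \<in> blocks_through x" "E \<in> blocks_through x" "D \<noteq> E" for D E
    using that block_unique unfolding blocks_through_def by blast
  have "(k - 1) * card (blocks_through x) = (\<Sum>D\<in>blocks_through x. card (D - {x}))"
    by (simp add: blocks_through_def block_card finite_block)
  also have "\<dots> = card (\<Union>D\<in>blocks_through x. D - {x})"
    by (rule card_UN_disjoint[symmetric])
       (use disjoint finite_blocks finite_block in \<open>auto simp: blocks_through_def\<close>)
  also have "\<dots> \<le> card W"
    using assms by (intro card_mono) auto
  finally show ?thesis .
qed

lemma card_blocks_meeting_le:
  assumes "X \<inter> Y = {}" "finite X" "finite Y"
  shows "card (blocks_meeting X Y) \<le> card X * card Y"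
proof -
  have "blocks_meeting X Y = (\<Union>p\<in>X \<times> Y. {D\<in>\<B>. fst p \<in> D \<and> snd p \<in> D})"
    unfolding blocks_meeting_def by fastforce
  also have "card \<dots> \<le> (\<Sum>p\<in>X \<times> Y. card {D\<in>\<B>. fst p \<in> D \<and> snd p \<in> D})"
    by (rule card_UN_le) (use assms in auto)
  also have "\<dots> \<le> (\<Sum>p\<in>X \<times> Y. 1)"
    using assms(1) by (intro sum_mono card_blocks_through_pair_le) auto
  finally show ?thesis
    by (simp add: card_cartesian_product)
qed

lemma card_blocks_through_meeting_le:
  assumes "C \<in> \<B>" "D \<in> \<B>" "c \<in> C" "c \<notin> D" "C \<inter> D \<noteq> {}"
  shows "card {E\<in>blocks_through c. E \<noteq> C \<and> E \<inter> D \<noteq> {}} \<le> k - 1"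
proof -
  have "{E\<in>blocks_through c. E \<noteq> C \<and> E \<inter> D \<noteq> {}} \<subseteq> blocks_meeting {c} (D - C)"
  proof
    fix E assume E: "E \<in> {E\<in>blocks_through c. E \<noteq> C \<and> E \<inter> D \<noteq> {}}"
    then obtain z where z: "z \<in> E" "z \<in> D"
      by blast
    have "z \<notin> C"
      using block_unique[of E C c z] E z assms unfolding blocks_through_def by blast
    then show "E \<in> blocks_meeting {c} (D - C)"
      using E z unfolding blocks_through_def blocks_meeting_def by blast
  qed
  then have "card {E\<in>blocks_through c. E \<noteq> C \<and> E \<inter> D \<noteq> {}} \<le> card (blocks_meeting {c} (D - C))"
    by (intro card_mono) (simp_all add: blocks_meeting_def finite_blocks)
  also have "\<dots> \<le> card (D - C)"
    using card_blocks_meeting_le[of "{c}" "D - C"] assms finite_block by auto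
  also have "\<dots> \<le> k - 1"
  proof -
    have "card (D \<inter> C) \<ge> 1"
      using assms finite_block by (auto simp: Suc_le_eq card_gt_0_iff)
    then show ?thesis
      using card_Diff_subset_Int[of D C] assms finite_block block_card by auto
  qed
  finally show ?thesis .
qed

text \<open>Fix a member C. Every other member meets C in some c and also meets a member missing c,
  which leaves at most k - 1 candidates for each of the k choices of c.\<close>
lemma card_intersecting_le:
  assumes "F \<subseteq> \<B>"
    and intersecting: "\<And>C D. C \<in> F \<Longrightarrow> D \<in> F \<Longrightarrow> C \<inter> D \<noteq> {}"
    and no_common_point: "\<And>x. \<exists>D\<in>F. x \<notin> D"
  shows "card F \<le> k * (k - 1) + 1"
proof -
  obtain C where C: "C \<in> F"
    using no_common_point by blast
  define miss where "miss x = (SOME D. D \<in> F \<and> x \<notin> D)" for x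
  have miss: "miss x \<in> F" "x \<notin> miss x" for x
    using someI_ex[OF no_common_point[of x, unfolded Bex_def]] unfolding miss_def by auto
  define G where "G c = {E\<in>blocks_through c. E \<noteq> C \<and> E \<inter> miss c \<noteq> {}}" for c
  have "F \<subseteq> insert C (\<Union>c\<in>C. G c)"
  proof
    fix E assume "E \<in> F"
    show "E \<in> insert C (\<Union>c\<in>C. G c)"
    proof (cases "E = C")
      case False
      obtain c where "c \<in> E" "c \<in> C"
        using intersecting[OF \<open>E \<in> F\<close> C] by blast
      moreover have "E \<inter> miss c \<noteq> {}"
        using intersecting[OF \<open>E \<in> F\<close> miss(1)] .
      ultimately have "E \<in> G c"
        using False \<open>E \<in> F\<close> \<open>F \<subseteq> \<B>\<close> unfolding G_def blocks_through_def by blast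
      with \<open>c \<in> C\<close> show ?thesis
        by blast
    qed simp
  qed
  moreover have "insert C (\<Union>c\<in>C. G c) \<subseteq> \<B>"
    using C \<open>F \<subseteq> \<B>\<close> by (auto simp: G_def blocks_through_def)
  ultimately have "card F \<le> card (insert C (\<Union>c\<in>C. G c))"
    by (intro card_mono finite_subset[OF _ finite_blocks])
  also have "\<dots> \<le> Suc (card (\<Union>c\<in>C. G c))"
    using card_Un_le[of "{C}" "\<Union>c\<in>C. G c"] by simp
  also have "card (\<Union>c\<in>C. G c) \<le> (\<Sum>c\<in>C. card (G c))"
    by (rule card_UN_le) (use C \<open>F \<subseteq> \<B>\<close> finite_block in auto)
  also have "\<dots> \<le> (\<Sum>c\<in>C. k - 1)"
    unfolding G_def using C miss intersecting \<open>F \<subseteq> \<B>\<close>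
    by (intro sum_mono card_blocks_through_meeting_le) auto
  also have "\<dots> = k * (k - 1)"
    using C \<open>F \<subseteq> \<B>\<close> block_card by auto
  finally show ?thesis by simp
qed

lemma card_blocks_through_le_Suc:
  assumes "2 \<le> k" "v = m * (k - 1) + 2" "x < v"
  shows "card (blocks_through x) \<le> m + 1"
proof -
  have "(k - 1) * card (blocks_through x) \<le> card ({..<v} - {x})"
    by (rule card_blocks_through_le) (auto simp: blocks_through_def dest: block_subset)
  also have "\<dots> = (k - 1) * m + 1"
    using assms by simp
  also have "\<dots> \<le> (k - 1) * (m + 1)"
    using assms by (simp add: distrib_left)
  finally show ?thesis
    using assms(1) mult_le_cancel1[of "k - 1" "card (blocks_through x)" "m + 1"] by linarith
qed

lemma card_blocks_through_Un_le:
  assumes "2 \<le> k" "v = m * (k - 1) + 2" "x \<noteq> y" "x < v" "y < v"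
  shows "card (blocks_through x \<union> blocks_through y) \<le> 2 * m + 1"
proof (cases "blocks_through x \<inter> blocks_through y = {}")
  case False
  have finite_blocks_through: "finite (blocks_through z)" for z
    using finite_blocks by (simp add: blocks_through_def)
  then have "card (blocks_through x \<inter> blocks_through y) \<ge> 1"
    using False by (simp add: Suc_le_eq card_gt_0_iff)
  then show ?thesis
    using card_Un_Int[OF finite_blocks_through finite_blocks_through, of x y]
      card_blocks_through_le_Suc[OF assms(1,2,4)] card_blocks_through_le_Suc[OF assms(1,2,5)]
    by linarith
next
  case True
  have card_le_m: "card (blocks_through z) \<le> m" if "z \<in> {x, y}" for z
  proof -
    have "(k - 1) * card (blocks_through z) \<le> card ({..<v} - {x, y})"
      by (rule card_blocks_through_le)
         (use True that in \<open>auto simp: blocks_through_def dest: block_subset\<close>)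
    also have "\<dots> = (k - 1) * m"
      using assms by (simp add: card_Diff_subset)
    finally show ?thesis
      using assms by simp
  qed
  show ?thesis
    using card_Un_le[of "blocks_through x" "blocks_through y"] card_le_m[of x] card_le_m[of y]
    by simp
qed

end

lemma card_Un3_le: "card (A \<union> B \<union> C) \<le> card A + card B + card C"
  using card_Un_le[of "A \<union> B" C] card_Un_le[of A B] by linarith

locale packing_without_ppc3 = packing +
  fixes m :: nat
  assumes k_ge_2: "2 \<le> k"
    and v_eq: "v = m * (k - 1) + 2"
    and m_ge: "k * (k - 1) + 2 \<le> m"
    and no_ppc3: "\<nexists>P. is_ppc \<B> P \<and> card P = 3"
begin

lemma no_three_disjoint_blocks:
  assumes "C \<in> \<B>" "D \<in> \<B>" "E \<in> \<B>" "C \<inter> D = {}" "C \<inter> E = {}" "D \<inter> E = {}"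
  shows False
proof -
  have "X \<noteq> {}" if "X \<in> \<B>" for X
    using that block_card k_ge_2 by fastforce
  then have "card {C, D, E} = 3"
    using assms by (auto simp: card_insert_if)
  moreover have "is_ppc \<B> {C, D, E}"
    using assms by (auto simp: is_ppc_def pairwise_def disjnt_def)
  ultimately show False
    using no_ppc3 by blast
qed

lemma blocks_avoiding_through_or_card_le:
  assumes "A \<in> \<B>" "B \<in> \<B>" "A \<inter> B = {}"
  shows "(\<exists>x\<in>A. blocks_avoiding B \<subseteq> blocks_through x) \<or> card (blocks_avoiding B) \<le> k * (k - 1) + 1"
proof (cases "\<exists>x. \<forall>D\<in>blocks_avoiding B. x \<in> D")
  case True
  then obtain x where "\<forall>D\<in>blocks_avoiding B. x \<in> D" by blast
  moreover have "A \<in> blocks_avoiding B"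
    using assms by (auto simp: blocks_avoiding_def)
  ultimately show ?thesis
    by (auto simp: blocks_avoiding_def blocks_through_def)
next
  case False
  have "card (blocks_avoiding B) \<le> k * (k - 1) + 1"
  proof (rule card_intersecting_le)
    show "C \<inter> D \<noteq> {}" if "C \<in> blocks_avoiding B" "D \<in> blocks_avoiding B" for C D
      using that no_three_disjoint_blocks[of C D B] assms by (auto simp: blocks_avoiding_def)
  qed (use False in \<open>auto simp: blocks_avoiding_def\<close>)
  then show ?thesis ..
qed

lemma card_le_two_pencils:
  assumes "A \<in> \<B>" "B \<in> \<B>" "A \<inter> B = {}"
    and "x \<in> A" "blocks_avoiding B \<subseteq> blocks_through x"
    and "y \<in> B" "blocks_avoiding A \<subseteq> blocks_through y"
  shows "card \<B> + 2 \<le> 2 * m + k^2"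
proof -
  have "\<B> = (blocks_through x \<union> blocks_through y) \<union> blocks_meeting (A - {x}) (B - {y})"
    using assms by (auto simp: blocks_avoiding_def blocks_through_def blocks_meeting_def)
  then have "card \<B> \<le>
      card (blocks_through x \<union> blocks_through y) + card (blocks_meeting (A - {x}) (B - {y}))"
    by (metis card_Un_le)
  also have "\<dots> \<le> (2 * m + 1) + (k - 1) * (k - 1)"
  proof (rule add_mono)
    show "card (blocks_through x \<union> blocks_through y) \<le> 2 * m + 1"
      using assms block_subset[OF assms(1)] block_subset[OF assms(2)]
      by (intro card_blocks_through_Un_le[OF k_ge_2 v_eq]) auto
    show "card (blocks_meeting (A - {x}) (B - {y})) \<le> (k - 1) * (k - 1)"
      using card_blocks_meeting_le[of "A - {x}" "B - {y}"] assms
      by (simp add: block_card finite_block Diff_Int_distrib Diff_Int_distrib2)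
  qed
  finally show ?thesis
    using k_ge_2 by (cases k) (auto simp: algebra_simps power2_eq_square)
qed

lemma card_le_pencil_and_intersecting:
  assumes "A \<in> \<B>" "B \<in> \<B>" "A \<inter> B = {}" "x \<in> A"
    and "blocks_avoiding B \<subseteq> blocks_through x" "card (blocks_avoiding A) \<le> k * (k - 1) + 1"
  shows "card \<B> + 2 \<le> 2 * m + k^2"
proof -
  have "\<B> = blocks_through x \<union> blocks_avoiding A \<union> blocks_meeting (A - {x}) B"
    using assms by (auto simp: blocks_avoiding_def blocks_through_def blocks_meeting_def)
  then have "card \<B> \<le>
      card (blocks_through x) + card (blocks_avoiding A) + card (blocks_meeting (A - {x}) B)"
    by (metis card_Un3_le)
  also have "\<dots> \<le> (m + 1) + (k * (k - 1) + 1) + (k - 1) * k"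
  proof (intro add_mono)
    show "card (blocks_through x) \<le> m + 1"
      using assms block_subset[OF assms(1)]
      by (intro card_blocks_through_le_Suc[OF k_ge_2 v_eq]) auto
    show "card (blocks_meeting (A - {x}) B) \<le> (k - 1) * k"
      using card_blocks_meeting_le[of "A - {x}" B] assms
      by (simp add: block_card finite_block Int_Diff Diff_Int_distrib2)
  qed (use assms in simp)
  finally show ?thesis
    using k_ge_2 m_ge by (cases k) (auto simp: algebra_simps power2_eq_square)
qed

lemma card_le_two_intersecting:
  assumes "A \<in> \<B>" "B \<in> \<B>" "A \<inter> B = {}"
    and "card (blocks_avoiding A) \<le> k * (k - 1) + 1" "card (blocks_avoiding B) \<le> k * (k - 1) + 1"
  shows "card \<B> + 2 \<le> 2 * m + k^2"
proof -
  have "\<B> = blocks_avoiding A \<union> blocks_avoiding B \<union> blocks_meeting A B"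
    by (auto simp: blocks_avoiding_def blocks_meeting_def)
  then have "card \<B> \<le>
      card (blocks_avoiding A) + card (blocks_avoiding B) + card (blocks_meeting A B)"
    by (metis card_Un3_le)
  also have "\<dots> \<le> 2 * (k * (k - 1) + 1) + k * k"
    using card_blocks_meeting_le[of A B] assms by (simp add: block_card finite_block)
  finally show ?thesis
    using k_ge_2 m_ge by (cases k) (auto simp: algebra_simps power2_eq_square)
qed

lemma card_blocks_le:
  assumes "A \<in> \<B>" "B \<in> \<B>" "A \<inter> B = {}"
  shows "card \<B> + 2 \<le> 2 * m + k^2"
proof -
  have "B \<inter> A = {}"
    using assms(3) by blast
  then show ?thesis
    using blocks_avoiding_through_or_card_le[OF assms]
      blocks_avoiding_through_or_card_le[OF assms(2,1) \<open>B \<inter> A = {}\<close>]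
      card_le_two_pencils[OF assms] card_le_two_intersecting[OF assms]
      card_le_pencil_and_intersecting[OF assms]
      card_le_pencil_and_intersecting[OF assms(2,1) \<open>B \<inter> A = {}\<close>]
    by blast
qed

end

lemma card_le_if_max_ppc_size_2:
  assumes "is_packing v k \<B>" "max_ppc_size \<B> 2"
    and "2 \<le> k" "v = m * (k - 1) + 2" "k * (k - 1) + 2 \<le> m"
  shows "card \<B> + 2 \<le> 2 * m + k^2"
proof -
  interpret packing_without_ppc3 v k \<B> m
    using assms by unfold_locales (simp_all add: max_ppc_size_def)
  obtain P where "is_ppc \<B> P" "card P = 2"
    using assms(2) unfolding max_ppc_size_def by blast
  then obtain A B where "is_ppc \<B> {A, B}" "A \<noteq> B"
    by (auto simp: card_2_iff)
  then have "A \<in> \<B>" "B \<in> \<B>" "A \<inter> B = {}"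
    by (auto simp: is_ppc_def pairwise_def disjnt_def)
  then show ?thesis
    by (rule card_blocks_le)
qed

lemma card_ppc_le_card_transversal:
  assumes "is_ppc \<B> P" "finite S" "\<And>D. D \<in> \<B> \<Longrightarrow> D \<inter> S \<noteq> {}"
  shows "card P \<le> card S"
proof -
  define pick where "pick D = (SOME s. s \<in> D \<inter> S)" for D
  have pick: "pick D \<in> D \<inter> S" if "D \<in> P" for D
  proof -
    have "D \<inter> S \<noteq> {}"
      using assms(1,3) that by (auto simp: is_ppc_def)
    then show ?thesis
      unfolding pick_def by (rule some_in_eq[THEN iffD2])
  qed
  have "inj_on pick P"
  proof (rule inj_onI)
    fix C D assume "C \<in> P" "D \<in> P" "pick C = pick D"
    then have "pick C \<in> C \<inter> D"
      using pick[of C] pick[of D] by simp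
    then have "C \<inter> D \<noteq> {}"
      by blast
    then show "C = D"
      using disjointD[of P C D] \<open>C \<in> P\<close> \<open>D \<in> P\<close> assms(1) by (auto simp: is_ppc_def)
  qed
  moreover have "pick ` P \<subseteq> S"
    using pick by auto
  ultimately show ?thesis
    using assms(2) by (rule card_inj_on_le)
qed

lemma is_packingI:
  assumes "\<And>D. D \<in> \<B> \<Longrightarrow> D \<subseteq> {..<v}" "\<And>D. D \<in> \<B> \<Longrightarrow> card D = k"
    and "\<And>C D x y. C \<in> \<B> \<Longrightarrow> D \<in> \<B> \<Longrightarrow> x \<noteq> y \<Longrightarrow> x \<in> C \<inter> D \<Longrightarrow> y \<in> C \<inter> D \<Longrightarrow> C = D"
  shows "is_packing v k \<B>"
proof -
  have "card {B\<in>\<B>. x \<in> B \<and> y \<in> B} \<le> 1" if "x \<noteq> y" for x y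
  proof -
    have "finite {B\<in>\<B>. x \<in> B \<and> y \<in> B}"
      by (rule finite_subset[of _ "Pow {..<v}"]) (use assms(1) in auto)
    then show ?thesis
      using assms(3)[OF _ _ that] by (simp add: card_le_Suc0_iff_eq)
  qed
  then show ?thesis
    using assms(1,2) unfolding is_packing_def by blast
qed

lemma beta_bounds:
  assumes "is_packing v k \<B>\<^sub>0" "max_ppc_size \<B>\<^sub>0 \<rho>"
    and "\<And>\<B>. is_packing v k \<B> \<Longrightarrow> max_ppc_size \<B> \<rho> \<Longrightarrow> card \<B> \<le> U"
  shows "card \<B>\<^sub>0 \<le> beta \<rho> v k" "beta \<rho> v k \<le> U"
proof -
  define S where "S = {card \<B> | \<B>. is_packing v k \<B> \<and> max_ppc_size \<B> \<rho>}"
  have "finite S"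
    by (rule finite_subset[of _ "{..U}"]) (use assms(3) in \<open>auto simp: S_def\<close>)
  moreover have "card \<B>\<^sub>0 \<in> S"
    using assms(1,2) by (auto simp: S_def)
  ultimately have "card \<B>\<^sub>0 \<le> Max S" "Max S \<in> S"
    by (auto intro: Max_in)
  moreover have "s \<le> U" if "s \<in> S" for s
    using that assms(3) by (auto simp: S_def)
  ultimately show "card \<B>\<^sub>0 \<le> beta \<rho> v k" "beta \<rho> v k \<le> U"
    unfolding beta_def S_def[symmetric] by auto
qed

lemma mod_add_right_cancel_less:
  fixes a b c m :: nat
  assumes "(a + c) mod m = (b + c) mod m" "a < m" "b < m"
  shows "a = b"
  using assms cong_add_rcancel_nat[of a c b m] cong_less_modulus_unique_nat[of a b m]
  by (simp add: cong_def)

text \<open>Besides 0 and 1, the points form an m \<times> q grid, (i, t) being encoded as 2 + i q + t.\<close>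

definition grid_point :: "nat \<Rightarrow> nat \<Rightarrow> nat \<Rightarrow> nat" where
  "grid_point q i t = 2 + i * q + t"

definition row_block :: "nat \<Rightarrow> nat \<Rightarrow> nat set" where
  "row_block q i = insert 0 (grid_point q i ` {..<q})"

definition diagonal_block :: "nat \<Rightarrow> nat \<Rightarrow> nat \<Rightarrow> nat set" where
  "diagonal_block q m j = insert 1 ((\<lambda>t. grid_point q ((j + t) mod m) t) ` {..<q})"

definition two_pencil_packing :: "nat \<Rightarrow> nat \<Rightarrow> nat set set" where
  "two_pencil_packing q m = row_block q ` {..<m} \<union> diagonal_block q m ` {..<m}"

lemma grid_point_eq_iff:
  assumes "t < q" "t' < q"
  shows "grid_point q i t = grid_point q i' t' \<longleftrightarrow> i = i' \<and> t = t'"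
proof
  assume "grid_point q i t = grid_point q i' t'"
  then have "i * q + t = i' * q + t'"
    by (simp add: grid_point_def)
  then have "(i * q + t) div q = (i' * q + t') div q" "(i * q + t) mod q = (i' * q + t') mod q"
    by simp_all
  then show "i = i' \<and> t = t'"
    using assms by simp
qed simp

lemma grid_point_neq [simp]:
  "grid_point q i t \<noteq> 0" "0 \<noteq> grid_point q i t"
  "grid_point q i t \<noteq> Suc 0" "Suc 0 \<noteq> grid_point q i t"
  by (simp_all add: grid_point_def)

lemma grid_point_less:
  assumes "i < m" "t < q"
  shows "grid_point q i t < m * q + 2"
proof -
  have "i * q + t < (i + 1) * q"
    using assms by simp
  also have "\<dots> \<le> m * q"
    using assms by (intro mult_le_mono1) simp
  finally show ?thesis
    by (simp add: grid_point_def)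
qed

lemma zero_in_row_block: "0 \<in> row_block q i"
  and one_notin_row_block: "1 \<notin> row_block q i"
  and one_in_diagonal_block: "1 \<in> diagonal_block q m j"
  and zero_notin_diagonal_block: "0 \<notin> diagonal_block q m j"
  by (auto simp: row_block_def diagonal_block_def)

lemma grid_point_in_row_block_iff:
  "t < q \<Longrightarrow> grid_point q i t \<in> row_block q i' \<longleftrightarrow> i = i'"
  by (auto simp: row_block_def grid_point_eq_iff)

lemma grid_point_in_diagonal_block_iff:
  "t < q \<Longrightarrow> grid_point q i t \<in> diagonal_block q m j \<longleftrightarrow> i = (j + t) mod m"
  by (auto simp: diagonal_block_def grid_point_eq_iff)

lemma card_row_block: "card (row_block q i) = Suc q"
proof -
  have "inj_on (grid_point q i) {..<q}"
    by (auto intro: inj_onI simp: grid_point_eq_iff)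
  then show ?thesis
    by (simp add: row_block_def card_image image_iff)
qed

lemma card_diagonal_block: "card (diagonal_block q m j) = Suc q"
proof -
  have "inj_on (\<lambda>t. grid_point q ((j + t) mod m) t) {..<q}"
    by (auto intro: inj_onI simp: grid_point_eq_iff)
  then show ?thesis
    by (simp add: diagonal_block_def card_image image_iff)
qed

lemma row_blocks_inter:
  assumes "i \<noteq> i'" "x \<in> row_block q i" "x \<in> row_block q i'"
  shows "x = 0"
  using assms by (auto simp: row_block_def grid_point_eq_iff)

lemma diagonal_blocks_inter:
  assumes "j < m" "j' < m" "j \<noteq> j'" "x \<in> diagonal_block q m j" "x \<in> diagonal_block q m j'"
  shows "x = 1"
  using assms mod_add_right_cancel_less[of j _ m j']
  by (auto simp: diagonal_block_def grid_point_eq_iff)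

lemma row_diagonal_blocks_inter:
  assumes "q \<le> m"
    and "x \<in> row_block q i \<inter> diagonal_block q m j" "y \<in> row_block q i \<inter> diagonal_block q m j"
  shows "x = y"
proof -
  obtain t t' where "t < q" "x = grid_point q i t" "t' < q" "y = grid_point q i t'"
    using assms(2,3) zero_notin_diagonal_block by (fastforce simp: row_block_def)
  moreover from this have "(t + j) mod m = (t' + j) mod m"
    using assms(2,3) by (simp add: grid_point_in_diagonal_block_iff add.commute)
  ultimately show ?thesis
    using mod_add_right_cancel_less[of t j m t'] assms(1) by simp
qed

lemma two_pencil_packing_linear:
  assumes "q \<le> m" "C \<in> two_pencil_packing q m" "D \<in> two_pencil_packing q m" "C \<noteq> D"
    and "x \<in> C \<inter> D" "y \<in> C \<inter> D"
  shows "x = y"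
proof -
  consider (rows) i i' where "C = row_block q i" "D = row_block q i'"
    | (diagonals) j j' where "j < m" "j' < m" "C = diagonal_block q m j" "D = diagonal_block q m j'"
    | (mixed) i j where "C \<inter> D = row_block q i \<inter> diagonal_block q m j"
    using assms(2,3) unfolding two_pencil_packing_def by (auto simp: Int_commute)
  then show ?thesis
  proof cases
    case rows
    then have "i \<noteq> i'"
      using assms(4) by blast
    then show ?thesis
      using rows assms(5,6) row_blocks_inter by blast
  next
    case diagonals
    then have "j \<noteq> j'"
      using assms(4) by blast
    then show ?thesis
      using diagonals assms(5,6) diagonal_blocks_inter by blast
  next
    case mixed
    then show ?thesis
      using assms(1,5,6) row_diagonal_blocks_inter by simp
  qed
qed

lemma is_packing_two_pencil_packing:
  assumes "q < m"
  shows "is_packing (m * q + 2) (Suc q) (two_pencil_packing q m)"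
proof (rule is_packingI)
  show "D \<subseteq> {..<m * q + 2}" if "D \<in> two_pencil_packing q m" for D
    using that assms grid_point_less[of _ m _ q]
    by (auto simp: two_pencil_packing_def row_block_def diagonal_block_def)
  show "card D = Suc q" if "D \<in> two_pencil_packing q m" for D
    using that by (auto simp: two_pencil_packing_def card_row_block card_diagonal_block)
  show "C = D" if "C \<in> two_pencil_packing q m" "D \<in> two_pencil_packing q m" "x \<noteq> y"
    "x \<in> C \<inter> D" "y \<in> C \<inter> D" for C D x y
    using that assms two_pencil_packing_linear[of q m C D x y] by fastforce
qed

lemma card_two_pencil_packing:
  assumes "0 < q"
  shows "card (two_pencil_packing q m) = 2 * m"
proof -
  have "inj_on (row_block q) {..<m}"
  proof (rule inj_onI)
    fix i i' assume "row_block q i = row_block q i'"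
    then show "i = i'"
      using grid_point_in_row_block_iff[OF assms, of i i]
        grid_point_in_row_block_iff[OF assms, of i i']
      by simp
  qed
  moreover have "inj_on (diagonal_block q m) {..<m}"
  proof (rule inj_onI)
    fix j j' assume "j \<in> {..<m}" "j' \<in> {..<m}" "diagonal_block q m j = diagonal_block q m j'"
    then show "j = j'"
      using grid_point_in_diagonal_block_iff[OF assms, of j m j]
        grid_point_in_diagonal_block_iff[OF assms, of j m j']
      by simp
  qed
  moreover have "row_block q ` {..<m} \<inter> diagonal_block q m ` {..<m} = {}"
    using zero_in_row_block zero_notin_diagonal_block by blast
  ultimately show ?thesis
    unfolding two_pencil_packing_def by (simp add: card_Un_disjoint card_image)
qed

lemma max_ppc_size_two_pencil_packing:
  assumes "0 < q" "q < m"
  shows "max_ppc_size (two_pencil_packing q m) 2"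
  unfolding max_ppc_size_def
proof
  have "row_block q 0 \<inter> diagonal_block q m 1 = {}"
  proof -
    have "(1 + t) mod m \<noteq> 0" if "t < q" for t
      using that assms by simp
    then show ?thesis
      using one_notin_row_block zero_notin_diagonal_block
      by (fastforce simp: row_block_def grid_point_in_diagonal_block_iff)
  qed
  moreover have "row_block q 0 \<noteq> diagonal_block q m 1"
    using zero_in_row_block zero_notin_diagonal_block by metis
  ultimately have "is_ppc (two_pencil_packing q m) {row_block q 0, diagonal_block q m 1}"
    using assms by (auto simp: is_ppc_def two_pencil_packing_def pairwise_def disjnt_def)
  then show "\<exists>P. is_ppc (two_pencil_packing q m) P \<and> card P = 2"
    using \<open>row_block q 0 \<noteq> diagonal_block q m 1\<close>
    by (intro exI[of _ "{row_block q 0, diagonal_block q m 1}"]) simp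
next
  have "card P \<le> 2" if "is_ppc (two_pencil_packing q m) P" for P
    using card_ppc_le_card_transversal[OF that, of "{0, 1}"]
      zero_in_row_block one_in_diagonal_block
    by (force simp: two_pencil_packing_def)
  then show "\<nexists>P. is_ppc (two_pencil_packing q m) P \<and> card P = 2 + 1"
    by fastforce
qed

lemma admissible_order_decomposition:
  fixes v k :: nat
  assumes "2 \<le> k" "v mod (k - 1) = 2 mod (k - 1)" "k * (k - 1)^2 + 2 * k \<le> v"
  obtains m where "v = m * (k - 1) + 2" "k * (k - 1) + 2 \<le> m"
proof -
  obtain q where k: "k = Suc q" "0 < q"
    using assms(1) by (cases k) auto
  have "2 \<le> v"
    using assms(1,3) by linarith
  then have "q dvd (v - 2)"
    using assms(2) k by (simp add: mod_eq_dvd_iff_nat)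
  then obtain m where "v - 2 = q * m"
    by (rule dvdE)
  then have v: "v = m * q + 2"
    using \<open>2 \<le> v\<close> by (metis le_add_diff_inverse2 mult.commute)
  then have "(Suc q * q + 2) * q \<le> m * q"
    using assms(3) k by (simp add: power2_eq_square algebra_simps)
  then have "Suc q * q + 2 \<le> m"
    using k(2) by (metis mult_le_cancel2)
  then show thesis
    using that v k by simp
qed

theorem theorem5p6:
  fixes v k :: nat
  assumes "k \<ge> 2"
    and "v mod (k - 1) = 2 mod (k - 1)"
    and "v \<ge> k * (k - 1)^2 + 2 * k"
  shows "(2 * real v - 4) / (real k - 1) \<le> real (beta 2 v k)
       \<and> real (beta 2 v k) \<le> (2 * real v - 4) / (real k - 1) + (real k)^2 - 2"
proof -
  obtain m where v: "v = m * (k - 1) + 2" and m: "k * (k - 1) + 2 \<le> m"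
    using admissible_order_decomposition[OF assms] .
  obtain q where q: "0 < q" "q < m" "k = Suc q" "v = m * q + 2"
  proof
    show "k = Suc (k - 1)" "v = m * (k - 1) + 2" "0 < k - 1"
      using assms(1) v by auto
    have "k - 1 \<le> k * (k - 1)"
      by simp
    then show "k - 1 < m"
      using m by linarith
  qed
  have lower: "2 * m \<le> beta 2 v k" and "beta 2 v k \<le> 2 * m + k^2 - 2"
    using beta_bounds[of v k "two_pencil_packing q m" 2 "2 * m + k^2 - 2"]
      is_packing_two_pencil_packing[OF q(2)] max_ppc_size_two_pencil_packing[OF q(1,2)]
      card_two_pencil_packing[OF q(1)] card_le_if_max_ppc_size_2[OF _ _ assms(1) v m] q(3,4)
    by fastforce+
  moreover have "2 \<le> k^2"
    using assms(1) power_mono[of 2 k 2] by simp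
  ultimately have "real (beta 2 v k + 2) \<le> real (2 * m + k^2)"
    by (intro of_nat_mono) linarith
  moreover have "(2 * real v - 4) / (real k - 1) = 2 * real m"
    using q by (simp add: field_simps)
  ultimately show ?thesis
    using lower by simp
qed

end
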